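(* Let $\mathcal D_2^S$ be the family of all successor expansions of finite 2-pointed directed graphs $(D,s,t)$. The directed reachability query, i.e. the class of structures in $\mathcal D_2^S$ in which there is a directed path from $s$ to $t$, is breadth-first traversal-invariant definable over $\mathcal D_2^S$.
   Context: A 2-pointed directed graph $(D,s,t)$ is a finite directed graph (binary relation $E$) with two distinguished vertices. A successor expansion of it is $(D,s,t,\min,\max,S)$ where $S$ is a unary function which is the successor function of some linear order of the vertex set with least element $\min$ and greatest element $\max$; its signature is denoted $(\Gamma_2,S)$. Graphs (as targets) are finite and undirected; $\Gamma_n$ is the signature with a binary relation symbol $E$ and $n$ constants; an $n$-pointed graph is a graph with $n$ distinguished vertices. A linear order $<$ of the vertex set of a graph, listing vertices $v_1<\dots<v_n$, is a breadth-first traversal (BFT) if for each $i\ge2$, whenever some $v_j$ with $j<i$ has a neighbour outside $\{v_1,\dots,v_{i-1}\}$, $v_i$ is adjacent to $v_{j^*}$ for the least such $j^*$ (a visiting order of breadth-first search). Equivalently: for all $u<v<w$, $uEw$ implies some $x<v$ with $x\le u$ has $xEv$. A $k$-ary interpretation $\pi:\Gamma_n\to K$ consists of a first-order $K$-formula $\partial^\pi(\bar x)$ in a $k$-tuple of variables, a $K$-formula $E^\pi(\bar x,\bar y)$, and for each constant a definition by cases (cases $K$-formulas, values $k$-tuples of $K$-terms); $A^\pi$ has domain $\{\bar a\in A^k:A\models\partial^\pi(\bar a)\}$ and symbols interpreted by their translations. $\pi$ is left total from $\mathcal K$ to $\mathcal G'$ if $A^\pi\in\mathcal G'$ for all $A\in\mathcal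 K$. For a family $\mathcal G'$ of finite $n$-pointed graphs let $\mathcal B$ be the family of expansions $(G,<)$ with $G\in\mathcal G'$ and $<$ a BFT of $G$. A $\Gamma_n\cup\{<\}$-sentence $\varphi$ is $(\mathcal G',\mathcal B)$-invariant if $(G,<)\models\varphi\iff(H,<')\models\varphi$ whenever $(G,<),(H,<')\in\mathcal B$ and $G\cong H$; then $G\models(\mathfrak B<)\varphi$ means $(G,<)\models\varphi$ for some (equivalently every) BFT. A query $Q$ (isomorphism-closed subfamily) over a family $\mathcal K$ of $K$-structures is basic BFT-invariant definable if there are $n$, a family $\mathcal G'$ of finite $n$-pointed graphs, a $(\mathcal G',\mathcal B)$-invariant sentence $\varphi$ and an interpretation $\pi:\Gamma_n\to K$ left total from $\mathcal K$ to $\mathcal G'$ with $A\in Q\iff A^\pi\models(\mathfrak B<)\varphi$ for all $A\in\mathcal K$; $Q$ is BFT-invariant definable if it is a boolean combination of such queries. *)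

theory Defs
  imports Main
begin

text \<open>Structures are taken over
  the carrier type nat (every finite structure has an isomorphic copy there).\<close>

record dstruct =
  dV :: "nat set"
  dE :: "(nat \<times> nat) set"
  ds :: nat
  dt :: nat
  dmin :: nat
  dmax :: nat
  dS :: "nat \<Rightarrow> nat"

definition lin_order :: "'v set \<Rightarrow> ('v \<times> 'v) set \<Rightarrow> bool" where
  "lin_order V L \<longleftrightarrow> L \<subseteq> V \<times> V \<and> strict_linear_order_on V L"

definition is_successor_of :: "nat set \<Rightarrow> (nat \<times> nat) set \<Rightarrow> nat \<Rightarrow> nat \<Rightarrow> (nat \<Rightarrow> nat) \<Rightarrow> bool" where
  "is_successor_of V L mn mx S \<longleftrightarrow>
     lin_order V L \<and> mn \<in> V \<and> mx \<in> V \<and>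
     (\<forall>v\<in>V. v \<noteq> mn \<longrightarrow> (mn, v) \<in> L) \<and>
     (\<forall>v\<in>V. v \<noteq> mx \<longrightarrow> (v, mx) \<in> L) \<and>
     (\<forall>v\<in>V. v \<noteq> mx \<longrightarrow> (v, S v) \<in> L \<and> \<not> (\<exists>w. (v, w) \<in> L \<and> (w, S v) \<in> L)) \<and>
     S mx = mx"

definition D2S :: "dstruct set" where
  "D2S = {A. finite (dV A) \<and> dE A \<subseteq> dV A \<times> dV A \<and> ds A \<in> dV A \<and> dt A \<in> dV A \<and>
             (\<exists>L. is_successor_of (dV A) L (dmin A) (dmax A) (dS A))}"

definition reach_query :: "dstruct set" where
  "reach_query = {A \<in> D2S. (ds A, dt A) \<in> (dE A)\<^sup>*}"

datatype kterm = KVar nat | KCs | KCt | KCmin | KCmax | KSucc kterm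

datatype kfm = KEq kterm kterm | KRel kterm kterm | KNot kfm | KAnd kfm kfm | KEx nat kfm

fun kfv_t :: "kterm \<Rightarrow> nat set" where
  "kfv_t (KVar x) = {x}"
| "kfv_t (KSucc t) = kfv_t t"
| "kfv_t _ = {}"

fun kfv :: "kfm \<Rightarrow> nat set" where
  "kfv (KEq t u) = kfv_t t \<union> kfv_t u"
| "kfv (KRel t u) = kfv_t t \<union> kfv_t u"
| "kfv (KNot p) = kfv p"
| "kfv (KAnd p q) = kfv p \<union> kfv q"
| "kfv (KEx x p) = kfv p - {x}"

fun keval :: "dstruct \<Rightarrow> (nat \<Rightarrow> nat) \<Rightarrow> kterm \<Rightarrow> nat" where
  "keval A \<sigma> (KVar x) = \<sigma> x"
| "keval A \<sigma> KCs = ds A"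
| "keval A \<sigma> KCt = dt A"
| "keval A \<sigma> KCmin = dmin A"
| "keval A \<sigma> KCmax = dmax A"
| "keval A \<sigma> (KSucc t) = dS A (keval A \<sigma> t)"

fun ksat :: "dstruct \<Rightarrow> (nat \<Rightarrow> nat) \<Rightarrow> kfm \<Rightarrow> bool" where
  "ksat A \<sigma> (KEq t u) \<longleftrightarrow> keval A \<sigma> t = keval A \<sigma> u"
| "ksat A \<sigma> (KRel t u) \<longleftrightarrow> (keval A \<sigma> t, keval A \<sigma> u) \<in> dE A"
| "ksat A \<sigma> (KNot p) \<longleftrightarrow> \<not> ksat A \<sigma> p"
| "ksat A \<sigma> (KAnd p q) \<longleftrightarrow> ksat A \<sigma> p \<and> ksat A \<sigma> q"
| "ksat A \<sigma> (KEx x p) \<longleftrightarrow> (\<exists>a\<in>dV A. ksat A (\<sigma>(x := a)) p)"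

record 'v pgraph =
  gV :: "'v set"
  gE :: "('v \<times> 'v) set"
  gc :: "'v list"

definition npgraph :: "nat \<Rightarrow> 'v pgraph \<Rightarrow> bool" where
  "npgraph n G \<longleftrightarrow> finite (gV G) \<and> gE G \<subseteq> gV G \<times> gV G \<and> sym (gE G) \<and> irrefl (gE G) \<and>
     length (gc G) = n \<and> set (gc G) \<subseteq> gV G"

definition pg_iso :: "'v pgraph \<Rightarrow> 'v pgraph \<Rightarrow> bool" where
  "pg_iso G H \<longleftrightarrow> (\<exists>f. bij_betw f (gV G) (gV H) \<and>
      (\<forall>x\<in>gV G. \<forall>y\<in>gV G. (x, y) \<in> gE G \<longleftrightarrow> (f x, f y) \<in> gE H) \<and>
      gc H = map f (gc G))"

text \<open>Breadth-first traversal, following the definition by visiting order: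
  for each vertex v, if some vertex before v has a neighbour not before v,
  then v is adjacent to the least such vertex.\<close>
definition is_bft :: "'v pgraph \<Rightarrow> ('v \<times> 'v) set \<Rightarrow> bool" where
  "is_bft G L \<longleftrightarrow> lin_order (gV G) L \<and>
     (\<forall>v\<in>gV G. \<forall>u. (u, v) \<in> L \<and> (\<exists>w. (u, w) \<in> gE G \<and> (w, v) \<notin> L) \<and>
        (\<forall>u'. (u', u) \<in> L \<longrightarrow> \<not> (\<exists>w. (u', w) \<in> gE G \<and> (w, v) \<notin> L))
        \<longrightarrow> (u, v) \<in> gE G)"

datatype gterm = GVar nat | GConst nat

datatype gfm = GEq gterm gterm | GRel gterm gterm | GLess gterm gterm
  | GNot gfm | GAnd gfm gfm | GEx nat gfm

fun gfv_t :: "gterm \<Rightarrow> nat set" where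
  "gfv_t (GVar x) = {x}"
| "gfv_t (GConst i) = {}"

fun gconst_t :: "gterm \<Rightarrow> nat set" where
  "gconst_t (GVar x) = {}"
| "gconst_t (GConst i) = {i}"

fun gfv :: "gfm \<Rightarrow> nat set" where
  "gfv (GEq t u) = gfv_t t \<union> gfv_t u"
| "gfv (GRel t u) = gfv_t t \<union> gfv_t u"
| "gfv (GLess t u) = gfv_t t \<union> gfv_t u"
| "gfv (GNot p) = gfv p"
| "gfv (GAnd p q) = gfv p \<union> gfv q"
| "gfv (GEx x p) = gfv p - {x}"

fun gconsts :: "gfm \<Rightarrow> nat set" where
  "gconsts (GEq t u) = gconst_t t \<union> gconst_t u"
| "gconsts (GRel t u) = gconst_t t \<union> gconst_t u"
| "gconsts (GLess t u) = gconst_t t \<union> gconst_t u"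
| "gconsts (GNot p) = gconsts p"
| "gconsts (GAnd p q) = gconsts p \<union> gconsts q"
| "gconsts (GEx x p) = gconsts p"

definition gsentence :: "nat \<Rightarrow> gfm \<Rightarrow> bool" where
  "gsentence n \<phi> \<longleftrightarrow> gfv \<phi> = {} \<and> gconsts \<phi> \<subseteq> {..<n}"

fun geval :: "'v pgraph \<Rightarrow> (nat \<Rightarrow> 'v) \<Rightarrow> gterm \<Rightarrow> 'v" where
  "geval G \<sigma> (GVar x) = \<sigma> x"
| "geval G \<sigma> (GConst i) = gc G ! i"

fun gsat :: "'v pgraph \<Rightarrow> ('v \<times> 'v) set \<Rightarrow> (nat \<Rightarrow> 'v) \<Rightarrow> gfm \<Rightarrow> bool" where
  "gsat G L \<sigma> (GEq t u) \<longleftrightarrow> geval G \<sigma> t = geval G \<sigma> u"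
| "gsat G L \<sigma> (GRel t u) \<longleftrightarrow> (geval G \<sigma> t, geval G \<sigma> u) \<in> gE G"
| "gsat G L \<sigma> (GLess t u) \<longleftrightarrow> (geval G \<sigma> t, geval G \<sigma> u) \<in> L"
| "gsat G L \<sigma> (GNot p) \<longleftrightarrow> \<not> gsat G L \<sigma> p"
| "gsat G L \<sigma> (GAnd p q) \<longleftrightarrow> gsat G L \<sigma> p \<and> gsat G L \<sigma> q"
| "gsat G L \<sigma> (GEx x p) \<longleftrightarrow> (\<exists>a\<in>gV G. gsat G L (\<sigma>(x := a)) p)"

text \<open>(G,<) satisfies a sentence (the assignment is irrelevant for sentences)\<close>
definition gmodels :: "'v pgraph \<Rightarrow> ('v \<times> 'v) set \<Rightarrow> gfm \<Rightarrow> bool" where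
  "gmodels G L \<phi> \<longleftrightarrow> (\<forall>\<sigma>. gsat G L \<sigma> \<phi>)"

text \<open>A definition by cases: list of (case sentence, value k-tuple of closed terms),
  together with an "otherwise" value; the first case that holds determines the value.\<close>
record interp =
  ik :: nat
  idom :: kfm
  iedge :: kfm
  iconsts :: "(((kfm \<times> kterm list) list) \<times> kterm list) list"

definition closed_tuple :: "nat \<Rightarrow> kterm list \<Rightarrow> bool" where
  "closed_tuple k ts \<longleftrightarrow> length ts = k \<and> (\<forall>t\<in>set ts. kfv_t t = {})"

definition wf_interp :: "nat \<Rightarrow> interp \<Rightarrow> bool" where
  "wf_interp n \<pi> \<longleftrightarrow> kfv (idom \<pi>) \<subseteq> {..<ik \<pi>} \<and> kfv (iedge \<pi>) \<subseteq> {..<2 * ik \<pi>} \<and>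
     length (iconsts \<pi>) = n \<and>
     (\<forall>(cs, d)\<in>set (iconsts \<pi>). closed_tuple (ik \<pi>) d \<and>
        (\<forall>(c, ts)\<in>set cs. kfv c = {} \<and> closed_tuple (ik \<pi>) ts))"

definition tuple_assign :: "nat list \<Rightarrow> nat \<Rightarrow> nat" where
  "tuple_assign xs i = (if i < length xs then xs ! i else 0)"

fun eval_cases :: "dstruct \<Rightarrow> (kfm \<times> kterm list) list \<Rightarrow> kterm list \<Rightarrow> nat list" where
  "eval_cases A [] d = map (keval A (\<lambda>_. dmin A)) d"
| "eval_cases A ((c, ts) # cs) d =
     (if ksat A (\<lambda>_. dmin A) c then map (keval A (\<lambda>_. dmin A)) ts else eval_cases A cs d)"

definition interp_struct :: "interp \<Rightarrow> dstruct \<Rightarrow> nat list pgraph" where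
  "interp_struct \<pi> A =
    (let D = {xs. length xs = ik \<pi> \<and> set xs \<subseteq> dV A \<and> ksat A (tuple_assign xs) (idom \<pi>)} in
     \<lparr> gV = D,
       gE = {(xs, ys). xs \<in> D \<and> ys \<in> D \<and> ksat A (tuple_assign (xs @ ys)) (iedge \<pi>)},
       gc = map (\<lambda>(cs, d). eval_cases A cs d) (iconsts \<pi>) \<rparr>)"

definition bft_invariant :: "nat list pgraph set \<Rightarrow> gfm \<Rightarrow> bool" where
  "bft_invariant Gs \<phi> \<longleftrightarrow>
     (\<forall>G L H L'. G \<in> Gs \<and> is_bft G L \<and> H \<in> Gs \<and> is_bft H L' \<and> pg_iso G H
        \<longrightarrow> (gmodels G L \<phi> \<longleftrightarrow> gmodels H L' \<phi>))"

definition bft_models :: "'v pgraph \<Rightarrow> gfm \<Rightarrow> bool" where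
  "bft_models G \<phi> \<longleftrightarrow> (\<exists>L. is_bft G L \<and> gmodels G L \<phi>)"

definition basic_bft_definable :: "dstruct set \<Rightarrow> dstruct set \<Rightarrow> bool" where
  "basic_bft_definable K Q \<longleftrightarrow> Q \<subseteq> K \<and>
     (\<exists>n Gs \<phi> \<pi>. Gs \<subseteq> {G. npgraph n G} \<and> gsentence n \<phi> \<and> wf_interp n \<pi> \<and>
        bft_invariant Gs \<phi> \<and> (\<forall>A\<in>K. interp_struct \<pi> A \<in> Gs) \<and>
        (\<forall>A\<in>K. A \<in> Q \<longleftrightarrow> bft_models (interp_struct \<pi> A) \<phi>))"

inductive bft_definable :: "dstruct set \<Rightarrow> dstruct set \<Rightarrow> bool" for K where
  basic: "basic_bft_definable K Q \<Longrightarrow> bft_definable K Q"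
| compl: "bft_definable K Q \<Longrightarrow> bft_definable K (K - Q)"
| inter: "bft_definable K Q1 \<Longrightarrow> bft_definable K Q2 \<Longrightarrow> bft_definable K (Q1 \<inter> Q2)"

end

theory Submission
  imports Defs "HOL-Library.Transitive_Closure_Table"
begin

text \<open>The source structure is interpreted as two copies of a layered graph.  The layers are
  indexed by the vertices in successor order, each layer is a copy of the vertex set, and \<open>u\<close> in
  layer \<open>i\<close> is joined to \<open>v\<close> in the next layer whenever \<open>u = v\<close> or \<open>u E v\<close>.  Thus, within a copy,
  the cell of \<open>t\<close> in the last layer lies within distance \<open>n - 1\<close> of the entry (the cell of \<open>s\<close>
  in the first layer) iff \<open>t\<close> is reachable from \<open>s\<close>, while a probe attached to the cell of \<open>s\<close>
  in the last layer lies at distance exactly \<open>n\<close>.  A hub joins the two entries, and a vertex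
  adjacent to the whole first layer makes each copy connected without creating shortcuts.

  A breadth-first traversal visits the vertices in order of their distance from its first
  vertex.  A copy not containing that vertex is entered only through its entry, so there the
  target cell is visited before the probe iff \<open>t\<close> is reachable from \<open>s\<close>.  Such a copy is
  recognised by comparing the hub with the entry of the first copy.\<close>

lemma
  assumes "lin_order V L"
  shows lin_order_field: "L \<subseteq> V \<times> V"
    and lin_order_trans: "(a, b) \<in> L \<Longrightarrow> (b, c) \<in> L \<Longrightarrow> (a, c) \<in> L"
    and lin_order_irrefl: "(a, a) \<notin> L"
    and lin_order_total: "a \<in> V \<Longrightarrow> b \<in> V \<Longrightarrow> a \<noteq> b \<Longrightarrow> (a, b) \<in> L \<or> (b, a) \<in> L"
  using assms
  unfolding lin_order_def strict_linear_order_on_def total_on_def irrefl_on_def trans_def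
  by blast+

lemma lin_order_asym: "lin_order V L \<Longrightarrow> (a, b) \<in> L \<Longrightarrow> (b, a) \<notin> L"
  using lin_order_trans[of V L a b a] lin_order_irrefl[of V L a] by blast

lemma wf_lin_order:
  assumes "finite V" "lin_order V L"
  shows "wf L"
proof (rule finite_acyclic_wf)
  show "finite L"
    using assms finite_subset[OF lin_order_field] by blast
  have "trans L"
    using assms(2) unfolding lin_order_def strict_linear_order_on_def by blast
  then show "acyclic L"
    using lin_order_irrefl[OF assms(2)] by (simp add: acyclic_def trancl_id)
qed

lemma lin_order_least:
  assumes "finite V" "lin_order V L" "x \<in> V"
  obtains r where "r \<in> V" "\<And>y. y \<in> V \<Longrightarrow> y \<noteq> r \<Longrightarrow> (r, y) \<in> L"
proof -
  obtain r where "r \<in> V" "\<And>y. (y, r) \<in> L \<Longrightarrow> y \<notin> V"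
    using wfE_min[OF wf_lin_order[OF assms(1,2)] assms(3)] by blast
  then show thesis
    using that lin_order_total[OF assms(2)] by blast
qed

lemma rtrancl_leaves_set:
  assumes "(a, b) \<in> E\<^sup>*" "a \<in> P" "b \<notin> P"
  shows "\<exists>u\<in>P. \<exists>w. w \<notin> P \<and> (u, w) \<in> E"
  using assms by (induction rule: rtrancl_induct) auto

lemma rtrancl_sym: "sym E \<Longrightarrow> (x, y) \<in> E\<^sup>* \<Longrightarrow> (y, x) \<in> E\<^sup>*"
  by (metis rtrancl_converseI sym_conv_converse_eq)

lemma rtrancl_path_relpow:
  "rtrancl_path (\<lambda>a b. (a, b) \<in> R) x xs y \<Longrightarrow> (x, y) \<in> R ^^ length xs"
  by (induction rule: rtrancl_path.induct)
    (auto simp del: relpow.simps intro: relpow_0_I relpow_Suc_I2)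

locale rooted_bft =
  fixes G :: "'v pgraph" and L :: "('v \<times> 'v) set" and r :: 'v
  assumes finite_vertices: "finite (gV G)"
    and edges_subset: "gE G \<subseteq> gV G \<times> gV G"
    and bft: "is_bft G L"
    and root: "r \<in> gV G"
    and root_least: "\<And>x. x \<in> gV G \<Longrightarrow> x \<noteq> r \<Longrightarrow> (r, x) \<in> L"
    and connected: "\<And>x. x \<in> gV G \<Longrightarrow> (r, x) \<in> (gE G)\<^sup>*"
begin

lemma lin_order_L: "lin_order (gV G) L"
  using bft unfolding is_bft_def by blast

lemmas L_field = lin_order_field[OF lin_order_L]
  and L_trans = lin_order_trans[OF lin_order_L]
  and L_irrefl = lin_order_irrefl[OF lin_order_L]
  and L_total = lin_order_total[OF lin_order_L]
  and L_asym = lin_order_asym[OF lin_order_L]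

definition frontier :: "'v \<Rightarrow> 'v set" where
  "frontier v = {u. (u, v) \<in> L \<and> (\<exists>w. (u, w) \<in> gE G \<and> (w, v) \<notin> L)}"

lemma frontier_antimono: "(x, y) \<in> L \<Longrightarrow> u \<in> frontier y \<Longrightarrow> (u, x) \<in> L \<Longrightarrow> u \<in> frontier x"
  unfolding frontier_def using L_trans[of _ x y] by blast

lemma least_frontier_adjacent:
  assumes "v \<in> gV G" "u \<in> frontier v" "\<And>u'. (u', u) \<in> L \<Longrightarrow> u' \<notin> frontier v"
  shows "(u, v) \<in> gE G"
proof (rule bft[unfolded is_bft_def, THEN conjunct2, rule_format, OF assms(1)])
  show "(u, v) \<in> L \<and> (\<exists>w. (u, w) \<in> gE G \<and> (w, v) \<notin> L) \<and>
      (\<forall>u'. (u', u) \<in> L \<longrightarrow> \<not> (\<exists>w. (u', w) \<in> gE G \<and> (w, v) \<notin> L))"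
    using assms(2,3) L_trans[of _ u v] unfolding frontier_def by blast
qed

lemma least_frontier:
  assumes v: "v \<in> gV G" "v \<noteq> r"
  obtains u where "u \<in> frontier v" "(u, v) \<in> gE G" "\<And>u'. u' \<in> frontier v \<Longrightarrow> u = u' \<or> (u, u') \<in> L"
proof -
  have "\<exists>u\<in>{u. (u, v) \<in> L}. \<exists>w. w \<notin> {u. (u, v) \<in> L} \<and> (u, w) \<in> gE G"
    by (rule rtrancl_leaves_set[OF connected[OF v(1)]]) (use v root_least L_irrefl in auto)
  then obtain u0 where "u0 \<in> frontier v"
    unfolding frontier_def by blast
  then obtain u where u: "u \<in> frontier v" and least: "\<And>u'. (u', u) \<in> L \<Longrightarrow> u' \<notin> frontier v"
    using wfE_min[OF wf_lin_order[OF finite_vertices lin_order_L], of u0 "frontier v"] by blast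
  have "(u, v) \<in> gE G"
    using least_frontier_adjacent v(1) u least by blast
  moreover have "u = u' \<or> (u, u') \<in> L" if "u' \<in> frontier v" for u'
    using that u least L_total L_field unfolding frontier_def by blast
  ultimately show thesis
    using that u by blast
qed

lemma least_frontier_before:
  assumes xy: "(x, y) \<in> L" and ux: "ux \<in> frontier x" "\<And>u'. u' \<in> frontier x \<Longrightarrow> ux = u' \<or> (ux, u') \<in> L"
    and uy: "uy \<in> frontier y"
  shows "ux = uy \<or> (ux, uy) \<in> L"
proof (cases "(uy, x) \<in> L")
  case True
  then show ?thesis
    using ux(2) frontier_antimono[OF xy uy] by blast
next
  case False
  moreover have "x \<in> gV G" "uy \<in> gV G" "(ux, x) \<in> L"
    using xy uy ux(1) L_field unfolding frontier_def by auto
  ultimately show ?thesis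
    using L_total[of x uy] L_trans[of ux x uy] by blast
qed

lemma not_before_root: "(x, r) \<notin> L"
proof
  assume "(x, r) \<in> L"
  then have "x \<in> gV G" "x \<noteq> r"
    using L_field L_irrefl by auto
  then show False
    using root_least L_asym \<open>(x, r) \<in> L\<close> by blast
qed

definition level :: "'v \<Rightarrow> nat" where
  "level x = (LEAST n. (r, x) \<in> gE G ^^ n)"

lemma level_path: "x \<in> gV G \<Longrightarrow> (r, x) \<in> gE G ^^ level x"
  unfolding level_def using connected rtrancl_power by (metis LeastI_ex)

lemma level_le: "(r, x) \<in> gE G ^^ n \<Longrightarrow> level x \<le> n"
  unfolding level_def by (rule Least_le)

lemma level_root: "level r = 0"
  using level_le[of r 0] by simp

lemma level_edge: "x \<in> gV G \<Longrightarrow> (x, y) \<in> gE G \<Longrightarrow> level y \<le> level x + 1"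
  using level_path level_le relpow_Suc_I by (metis Suc_eq_plus1)

lemma level_parent:
  assumes "x \<in> gV G" "x \<noteq> r"
  obtains y where "y \<in> gV G" "(y, x) \<in> gE G" "level x = Suc (level y)"
proof -
  have path: "(r, x) \<in> gE G ^^ level x"
    using level_path assms(1) .
  then obtain m where m: "level x = Suc m"
    using assms(2) by (cases "level x") auto
  then obtain y where y: "(r, y) \<in> gE G ^^ m" "(y, x) \<in> gE G"
    using path by (metis relpow_Suc_E)
  have "y \<in> gV G"
    using y(2) edges_subset by auto
  moreover have "level y = m"
    using level_le[OF y(1)] level_edge[OF \<open>y \<in> gV G\<close> y(2)] m by simp
  ultimately show thesis
    using that y(2) m by blast
qed

text \<open>Induction on the level of \<open>y\<close>: the least frontier vertex of \<open>x\<close> comes no later than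
  that of \<open>y\<close>, which in turn comes no later than a BFS parent of \<open>y\<close>.\<close>

lemma level_mono: "(x, y) \<in> L \<Longrightarrow> level x \<le> level y"
proof (induction "level y" arbitrary: x y rule: less_induct)
  case less
  have IH: "level b \<le> level y' \<Longrightarrow> (a, b) \<in> L \<Longrightarrow> level a \<le> level b"
    if "level y = Suc (level y')" for a b y'
    using less.hyps that by fastforce
  have xV: "x \<in> gV G" and yV: "y \<in> gV G" and "y \<noteq> r"
    using less.prems L_field not_before_root by auto
  show ?case
  proof (cases "x = r")
    case True
    then show ?thesis using level_root by simp
  next
    case False
    obtain y' where y': "y' \<in> gV G" "(y', y) \<in> gE G" "level y = Suc (level y')"
      using level_parent[OF yV \<open>y \<noteq> r\<close>] .
    have "(y', y) \<in> L"
    proof (rule ccontr)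
      assume "(y', y) \<notin> L"
      then have "(y, y') \<in> L"
        using L_total[OF y'(1) yV] y'(3) by force
      then show False
        using IH[OF y'(3) order_refl] y'(3) by fastforce
    qed
    then have "y' \<in> frontier y"
      unfolding frontier_def using y'(2) L_irrefl by blast
    obtain uy where uy: "uy \<in> frontier y" "\<And>u'. u' \<in> frontier y \<Longrightarrow> uy = u' \<or> (uy, u') \<in> L"
      using least_frontier[OF yV \<open>y \<noteq> r\<close>] by metis
    have "level uy \<le> level y'"
      using uy(2)[OF \<open>y' \<in> frontier y\<close>] IH[OF y'(3) order_refl] by fastforce
    obtain ux where ux: "ux \<in> frontier x" "(ux, x) \<in> gE G"
      "\<And>u'. u' \<in> frontier x \<Longrightarrow> ux = u' \<or> (ux, u') \<in> L"
      using least_frontier[OF xV False] by metis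
    have "level ux \<le> level uy"
      using least_frontier_before[OF less.prems ux(1,3) uy(1)] IH[OF y'(3) \<open>level uy \<le> level y'\<close>]
      by fastforce
    moreover have "level x \<le> level ux + 1"
      using level_edge[OF _ ux(2)] ux(1) L_field unfolding frontier_def by blast
    ultimately show ?thesis
      using \<open>level uy \<le> level y'\<close> y'(3) by simp
  qed
qed

lemma level_less_imp_before: "x \<in> gV G \<Longrightarrow> y \<in> gV G \<Longrightarrow> level x < level y \<Longrightarrow> (x, y) \<in> L"
  using level_mono L_total by (metis leD less_irrefl)

context
  fixes C :: "'v set" and a :: 'v and \<mu> :: "'v \<Rightarrow> nat"
  assumes region: "C \<subseteq> gV G" "a \<in> C" "r \<notin> C"
    and single_entry: "\<And>x y. x \<in> C \<Longrightarrow> (y, x) \<in> gE G \<Longrightarrow> y \<notin> C \<Longrightarrow> x = a"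
    and potential_step: "\<And>x y. x \<in> C \<Longrightarrow> y \<in> C \<Longrightarrow> (y, x) \<in> gE G \<Longrightarrow> \<mu> x \<le> \<mu> y + 1"
    and potential_entry: "\<mu> a = 0"
begin

lemma level_region_lower_bound: "x \<in> C \<Longrightarrow> level a + \<mu> x \<le> level x"
proof (induction "level x" arbitrary: x rule: less_induct)
  case less
  show ?case
  proof (cases "x = a")
    case True
    then show ?thesis using potential_entry by simp
  next
    case False
    obtain y where y: "y \<in> gV G" "(y, x) \<in> gE G" "level x = Suc (level y)"
      using level_parent less.prems region by blast
    have "y \<in> C"
      using single_entry[OF less.prems y(2)] False by blast
    then show ?thesis
      using less.hyps[of y] potential_step[OF less.prems _ y(2)] y(3) by fastforce
  qed
qed

lemma region_entry_parent:
  obtains y where "y \<notin> C" "(y, a) \<in> gE G" "level a = Suc (level y)"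
proof -
  obtain y where y: "y \<in> gV G" "(y, a) \<in> gE G" "level a = Suc (level y)"
    using level_parent region by blast
  have "y \<notin> C"
    using level_region_lower_bound[of y] y(3) by fastforce
  then show thesis
    using that y by blast
qed

end

end

definition bfs_admissible :: "('v \<times> 'v) set \<Rightarrow> 'v list \<Rightarrow> 'v \<Rightarrow> bool" where
  "bfs_admissible E xs v \<longleftrightarrow>
     (\<forall>i<length xs. (\<exists>w. (xs ! i, w) \<in> E \<and> w \<notin> set xs) \<and>
        (\<forall>i'<i. \<not> (\<exists>w. (xs ! i', w) \<in> E \<and> w \<notin> set xs)) \<longrightarrow> (xs ! i, v) \<in> E)"

definition bfs_sequence :: "('v \<times> 'v) set \<Rightarrow> 'v list \<Rightarrow> bool" where
  "bfs_sequence E xs \<longleftrightarrow> distinct xs \<and> (\<forall>j<length xs. bfs_admissible E (take j xs) (xs ! j))"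

lemma bfs_sequence_snoc:
  assumes "bfs_sequence E xs" "bfs_admissible E xs v" "v \<notin> set xs"
  shows "bfs_sequence E (xs @ [v])"
  using assms unfolding bfs_sequence_def
  by (auto simp: nth_append less_Suc_eq)

lemma bfs_admissible_exists:
  assumes "E \<subseteq> V \<times> V" "set xs \<subseteq> V" "set xs \<noteq> V"
  obtains v where "v \<in> V" "v \<notin> set xs" "bfs_admissible E xs v"
proof (cases "\<exists>i<length xs. \<exists>w. (xs ! i, w) \<in> E \<and> w \<notin> set xs")
  case True
  define i0 where "i0 = (LEAST i. i < length xs \<and> (\<exists>w. (xs ! i, w) \<in> E \<and> w \<notin> set xs))"
  have "i0 < length xs \<and> (\<exists>w. (xs ! i0, w) \<in> E \<and> w \<notin> set xs)"
    unfolding i0_def using LeastI_ex[OF True] by blast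
  then obtain w where w: "(xs ! i0, w) \<in> E" "w \<notin> set xs"
    by blast
  have "bfs_admissible E xs w"
    unfolding bfs_admissible_def
  proof (intro allI impI)
    fix i
    assume i: "i < length xs" and first: "(\<exists>w. (xs ! i, w) \<in> E \<and> w \<notin> set xs) \<and>
      (\<forall>i'<i. \<not> (\<exists>w. (xs ! i', w) \<in> E \<and> w \<notin> set xs))"
    have "i0 \<le> i"
      unfolding i0_def using i first by (intro Least_le) blast
    moreover have "\<not> i0 < i"
      using first w by blast
    ultimately show "(xs ! i, w) \<in> E"
      using w by simp
  qed
  then show thesis
    using that w assms(1) by blast
next
  case False
  then have "bfs_admissible E xs v" for v
    unfolding bfs_admissible_def by blast
  then show thesis
    using that assms(2,3) by blast
qed

lemma bfs_sequence_exists: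
  assumes "finite V" "E \<subseteq> V \<times> V"
  obtains xs where "bfs_sequence E xs" "set xs = V"
proof -
  have "\<exists>xs. bfs_sequence E xs \<and> set xs \<subseteq> V \<and> length xs = k" if "k \<le> card V" for k
    using that
  proof (induction k)
    case 0
    show ?case by (simp add: bfs_sequence_def)
  next
    case (Suc k)
    then obtain xs where xs: "bfs_sequence E xs" "set xs \<subseteq> V" "length xs = k"
      by auto
    then have "card (set xs) = k"
      by (simp add: bfs_sequence_def distinct_card)
    then have "set xs \<noteq> V"
      using Suc.prems by auto
    then obtain v where "v \<in> V" "v \<notin> set xs" "bfs_admissible E xs v"
      using bfs_admissible_exists[OF assms(2) xs(2)] by blast
    then show ?case
      using bfs_sequence_snoc[OF xs(1)] xs(2,3) by (intro exI[of _ "xs @ [v]"]) auto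
  qed
  then obtain xs where xs: "bfs_sequence E xs" "set xs \<subseteq> V" "length xs = card V"
    by blast
  then have "card (set xs) = card V"
    by (simp add: bfs_sequence_def distinct_card)
  then show thesis
    using that xs card_subset_eq[OF assms(1) xs(2)] by blast
qed

definition list_order :: "'v list \<Rightarrow> ('v \<times> 'v) set" where
  "list_order xs = {(xs ! i, xs ! j) | i j. i < j \<and> j < length xs}"

lemma list_order_nth:
  assumes "distinct xs" "i < length xs" "j < length xs"
  shows "(xs ! i, xs ! j) \<in> list_order xs \<longleftrightarrow> i < j"
proof
  assume "(xs ! i, xs ! j) \<in> list_order xs"
  then obtain i' j' where "xs ! i = xs ! i'" "xs ! j = xs ! j'" "i' < j'" "j' < length xs"
    unfolding list_order_def by blast
  then show "i < j"
    using assms nth_eq_iff_index_eq by (metis order.strict_trans)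
qed (use assms in \<open>auto simp: list_order_def\<close>)

lemma lin_order_list_order:
  assumes "distinct xs"
  shows "lin_order (set xs) (list_order xs)"
  unfolding lin_order_def strict_linear_order_on_def
proof (intro conjI)
  show "list_order xs \<subseteq> set xs \<times> set xs"
    unfolding list_order_def by auto
  show "trans (list_order xs)"
  proof (rule transI)
    fix x y z
    assume "(x, y) \<in> list_order xs" "(y, z) \<in> list_order xs"
    then obtain i j j' k where "x = xs ! i" "y = xs ! j" "y = xs ! j'" "z = xs ! k"
      "i < j" "j < length xs" "j' < k" "k < length xs"
      unfolding list_order_def by blast
    then show "(x, z) \<in> list_order xs"
      using list_order_nth[OF assms] nth_eq_iff_index_eq[OF assms] by (metis order.strict_trans)
  qed
  show "irrefl (list_order xs)"
    unfolding irrefl_on_def list_order_def using assms nth_eq_iff_index_eq by fastforce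
  show "total_on (set xs) (list_order xs)"
    unfolding total_on_def
  proof (intro ballI impI)
    fix x y
    assume "x \<in> set xs" "y \<in> set xs" "x \<noteq> y"
    then obtain i j where "i < length xs" "j < length xs" "x = xs ! i" "y = xs ! j" "i \<noteq> j"
      by (metis in_set_conv_nth)
    then show "(x, y) \<in> list_order xs \<or> (y, x) \<in> list_order xs"
      using list_order_nth[OF assms] by (metis nat_neq_iff)
  qed
qed

lemma list_order_before:
  assumes "distinct xs" "w \<in> set xs" "j < length xs"
  shows "(w, xs ! j) \<in> list_order xs \<longleftrightarrow> w \<in> set (take j xs)"
proof -
  obtain k where k: "k < length xs" "w = xs ! k"
    using assms(2) by (metis in_set_conv_nth)
  have "w \<in> set (take j xs) \<longleftrightarrow> k < j"
    using k assms(1,3) by (auto simp: in_set_conv_nth nth_eq_iff_index_eq)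
  then show ?thesis
    using list_order_nth[OF assms(1) k(1) assms(3)] k(2) by simp
qed

lemma is_bft_list_order:
  assumes seq: "bfs_sequence (gE G) xs" and V: "set xs = gV G" and E: "gE G \<subseteq> gV G \<times> gV G"
  shows "is_bft G (list_order xs)"
  unfolding is_bft_def
proof (intro conjI ballI allI impI)
  have dist: "distinct xs"
    using seq unfolding bfs_sequence_def by blast
  show "lin_order (gV G) (list_order xs)"
    using lin_order_list_order[OF dist] V by simp
  fix v u
  assume h: "(u, v) \<in> list_order xs \<and> (\<exists>w. (u, w) \<in> gE G \<and> (w, v) \<notin> list_order xs) \<and>
    (\<forall>u'. (u', u) \<in> list_order xs \<longrightarrow> \<not> (\<exists>w. (u', w) \<in> gE G \<and> (w, v) \<notin> list_order xs))"
  obtain i j where ij: "i < j" "j < length xs" "u = xs ! i" "v = xs ! j"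
    using h unfolding list_order_def by blast
  define P where "P = take j xs"
  have unvisited: "(w, v) \<notin> list_order xs \<longleftrightarrow> w \<notin> set P" if "(x, w) \<in> gE G" for x w
    using list_order_before[OF dist _ ij(2)] that E V ij(4) unfolding P_def by blast
  have "bfs_admissible (gE G) P v"
    using seq ij(2,4) unfolding bfs_sequence_def P_def by blast
  moreover have "i < length P" "P ! i = u"
    using ij unfolding P_def by auto
  moreover have "\<exists>w. (P ! i, w) \<in> gE G \<and> w \<notin> set P"
    using h unvisited \<open>P ! i = u\<close> by blast
  moreover have "\<not> (\<exists>w. (P ! i', w) \<in> gE G \<and> w \<notin> set P)" if "i' < i" for i'
  proof -
    have "P ! i' = xs ! i'" "(xs ! i', u) \<in> list_order xs"
      using that ij list_order_nth[OF dist, of i' i] unfolding P_def by auto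
    then show ?thesis
      using h unvisited by metis
  qed
  ultimately show "(u, v) \<in> gE G"
    unfolding bfs_admissible_def by blast
qed

lemma bft_exists:
  assumes "finite (gV G)" "gE G \<subseteq> gV G \<times> gV G"
  obtains L where "is_bft G L"
  using bfs_sequence_exists[OF assms] is_bft_list_order assms(2) by metis

lemma is_bft_pullback:
  assumes bij: "bij_betw f (gV G) (gV H)"
    and edges: "\<And>x y. x \<in> gV G \<Longrightarrow> y \<in> gV G \<Longrightarrow> (x, y) \<in> gE G \<longleftrightarrow> (f x, f y) \<in> gE H"
    and EG: "gE G \<subseteq> gV G \<times> gV G" and EH: "gE H \<subseteq> gV H \<times> gV H"
    and bft: "is_bft H L"
  shows "is_bft G {(x, y). x \<in> gV G \<and> y \<in> gV G \<and> (f x, f y) \<in> L}" (is "is_bft G ?L")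
  unfolding is_bft_def
proof (intro conjI ballI allI impI)
  have lin: "lin_order (gV H) L"
    using bft unfolding is_bft_def by blast
  have inj: "inj_on f (gV G)" and fV: "\<And>x. x \<in> gV G \<Longrightarrow> f x \<in> gV H"
    using bij unfolding bij_betw_def by auto
  have onto: "\<And>y. y \<in> gV H \<Longrightarrow> \<exists>x\<in>gV G. y = f x"
    using bij unfolding bij_betw_def by auto
  show "lin_order (gV G) ?L"
    unfolding lin_order_def strict_linear_order_on_def trans_def irrefl_on_def total_on_def
    using lin_order_trans[OF lin] lin_order_irrefl[OF lin] lin_order_total[OF lin] inj fV
    by (auto simp: inj_on_eq_iff)
  fix v u
  assume v: "v \<in> gV G" and h: "(u, v) \<in> ?L \<and> (\<exists>w. (u, w) \<in> gE G \<and> (w, v) \<notin> ?L) \<and>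
    (\<forall>u'. (u', u) \<in> ?L \<longrightarrow> \<not> (\<exists>w. (u', w) \<in> gE G \<and> (w, v) \<notin> ?L))"
  have u: "u \<in> gV G"
    using h by blast
  have "(f u, f v) \<in> gE H"
  proof (rule bft[unfolded is_bft_def, THEN conjunct2, rule_format, OF fV[OF v]],
      intro conjI allI impI notI)
    show "(f u, f v) \<in> L"
      using h by blast
    obtain w where "(u, w) \<in> gE G" "(w, v) \<notin> ?L"
      using h by blast
    then show "\<exists>w'. (f u, w') \<in> gE H \<and> (w', f v) \<notin> L"
      using edges[OF u] EG v by blast
  next
    fix u'
    assume "(u', f u) \<in> L" "\<exists>w'. (u', w') \<in> gE H \<and> (w', f v) \<notin> L"
    then obtain w' where "(u', f u) \<in> L" "(u', w') \<in> gE H" "(w', f v) \<notin> L"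
      by blast
    moreover obtain x w where "x \<in> gV G" "u' = f x" "w \<in> gV G" "w' = f w"
      using onto EH \<open>(u', w') \<in> gE H\<close> by blast
    ultimately show False
      using h u v edges by blast
  qed
  then show "(u, v) \<in> gE G"
    using edges u v by blast
qed

locale reach_instance =
  fixes A :: dstruct
  assumes in_D2S: "A \<in> D2S"
begin

abbreviation mn :: nat where "mn \<equiv> dmin A"
abbreviation mx :: nat where "mx \<equiv> dmax A"

definition succ_order :: "(nat \<times> nat) set" where
  "succ_order = (SOME L. is_successor_of (dV A) L mn mx (dS A))"

lemma is_successor_of_succ_order: "is_successor_of (dV A) succ_order mn mx (dS A)"
proof -
  have "\<exists>L. is_successor_of (dV A) L mn mx (dS A)"
    using in_D2S unfolding D2S_def by blast
  then show ?thesis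
    unfolding succ_order_def by (rule someI_ex)
qed

lemma finite_V: "finite (dV A)"
  and edges_V: "dE A \<subseteq> dV A \<times> dV A"
  and s_V: "ds A \<in> dV A"
  and t_V: "dt A \<in> dV A"
  using in_D2S unfolding D2S_def by auto

lemma lin_succ_order: "lin_order (dV A) succ_order"
  and mn_V: "mn \<in> dV A"
  and mx_V: "mx \<in> dV A"
  and mn_least: "\<And>v. v \<in> dV A \<Longrightarrow> v \<noteq> mn \<Longrightarrow> (mn, v) \<in> succ_order"
  and mx_greatest: "\<And>v. v \<in> dV A \<Longrightarrow> v \<noteq> mx \<Longrightarrow> (v, mx) \<in> succ_order"
  and succ_after: "\<And>v. v \<in> dV A \<Longrightarrow> v \<noteq> mx \<Longrightarrow> (v, dS A v) \<in> succ_order"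
  and succ_next: "\<And>v w. v \<in> dV A \<Longrightarrow> v \<noteq> mx \<Longrightarrow> (v, w) \<in> succ_order \<Longrightarrow> (w, dS A v) \<notin> succ_order"
  and succ_mx: "dS A mx = mx"
  using is_successor_of_succ_order unfolding is_successor_of_def by blast+

lemmas succ_order_field = lin_order_field[OF lin_succ_order]
  and succ_order_trans = lin_order_trans[OF lin_succ_order]
  and succ_order_irrefl = lin_order_irrefl[OF lin_succ_order]
  and succ_order_total = lin_order_total[OF lin_succ_order]

lemma succ_V: "v \<in> dV A \<Longrightarrow> dS A v \<in> dV A"
proof (cases "v = mx")
  case False
  moreover assume "v \<in> dV A"
  ultimately show ?thesis
    using succ_after succ_order_field by blast
qed (simp add: succ_mx mx_V)

lemma succ_neq: "v \<in> dV A \<Longrightarrow> v \<noteq> mx \<Longrightarrow> dS A v \<noteq> v"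
  using succ_after succ_order_irrefl by metis

lemma trivial_V:
  assumes "mn = mx" "v \<in> dV A"
  shows "v = mn"
proof (rule ccontr)
  assume "v \<noteq> mn"
  then have "(mn, v) \<in> succ_order" "(v, mn) \<in> succ_order"
    using assms mn_least mx_greatest by auto
  then show False
    using succ_order_trans succ_order_irrefl by blast
qed

definition rank :: "nat \<Rightarrow> nat" where
  "rank v = card {w \<in> dV A. (w, v) \<in> succ_order}"

lemma rank_succ:
  assumes v: "v \<in> dV A" "v \<noteq> mx"
  shows "rank (dS A v) = Suc (rank v)"
proof -
  have "{w \<in> dV A. (w, dS A v) \<in> succ_order} = insert v {w \<in> dV A. (w, v) \<in> succ_order}"
    using succ_after[OF v] succ_next[OF v] succ_order_total[OF _ v(1)]
      succ_order_trans[of _ v "dS A v"] v(1) by blast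
  moreover have "v \<notin> {w \<in> dV A. (w, v) \<in> succ_order}"
    using succ_order_irrefl by blast
  ultimately show ?thesis
    unfolding rank_def using finite_V by simp
qed

lemma rank_mn: "rank mn = 0"
proof -
  have "{w \<in> dV A. (w, mn) \<in> succ_order} = {}"
    using mn_least succ_order_trans[of _ mn _] succ_order_irrefl by blast
  then show ?thesis
    unfolding rank_def by (metis card.empty)
qed

lemma rank_strict_mono:
  assumes "v \<in> dV A" "(v, w) \<in> succ_order"
  shows "rank v < rank w"
  unfolding rank_def
proof (rule psubset_card_mono)
  show "finite {u \<in> dV A. (u, w) \<in> succ_order}"
    using finite_V by simp
  show "{u \<in> dV A. (u, v) \<in> succ_order} \<subset> {u \<in> dV A. (u, w) \<in> succ_order}"
    using assms succ_order_trans[of _ v w] succ_order_irrefl by blast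
qed

lemma rank_inj: "v \<in> dV A \<Longrightarrow> w \<in> dV A \<Longrightarrow> rank v = rank w \<Longrightarrow> v = w"
  using rank_strict_mono succ_order_total by (metis less_irrefl)

lemma rank_le_rank_mx: "v \<in> dV A \<Longrightarrow> rank v \<le> rank mx"
  using rank_strict_mono mx_greatest by (cases "v = mx") (auto intro: less_imp_le)

lemma Suc_rank_mx: "Suc (rank mx) = card (dV A)"
proof -
  have "{w \<in> dV A. (w, mx) \<in> succ_order} = dV A - {mx}"
    using mx_greatest succ_order_irrefl by blast
  then show ?thesis
    unfolding rank_def using finite_V mx_V card_Diff1_less card_Diff_singleton by fastforce
qed

lemma succ_iter:
  "j \<le> rank mx \<Longrightarrow> (dS A ^^ j) mn \<in> dV A \<and> rank ((dS A ^^ j) mn) = j"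
proof (induction j)
  case 0
  then show ?case using mn_V rank_mn by simp
next
  case (Suc j)
  then have "(dS A ^^ j) mn \<noteq> mx"
    by auto
  then show ?case
    using Suc succ_V rank_succ by simp
qed

lemma succ_iter_rank: "v \<in> dV A \<Longrightarrow> (dS A ^^ rank v) mn = v"
  using succ_iter rank_le_rank_mx rank_inj by blast

lemma relpow_from_s_V: "(ds A, v) \<in> dE A ^^ k \<Longrightarrow> v \<in> dV A"
  using s_V edges_V by (cases k) (auto elim: relpow_Suc_E)

lemma reachable_within_rank_mx:
  assumes "(ds A, dt A) \<in> (dE A)\<^sup>*"
  obtains k where "k \<le> rank mx" "(ds A, dt A) \<in> dE A ^^ k"
proof -
  have "(\<lambda>a b. (a, b) \<in> dE A)\<^sup>*\<^sup>* (ds A) (dt A)"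
    using assms by (simp add: rtrancl_def)
  then obtain xs where path: "rtrancl_path (\<lambda>a b. (a, b) \<in> dE A) (ds A) xs (dt A)"
    and dist: "distinct (ds A # xs)"
    using rtranclp_eq_rtrancl_path rtrancl_path_distinct by metis
  have "set (ds A # xs) \<subseteq> dV A"
    using rtrancl_path_Range[OF path] edges_V s_V by auto
  then have "card (set (ds A # xs)) \<le> card (dV A)"
    using card_mono[OF finite_V] by blast
  then have "length xs \<le> rank mx"
    using Suc_rank_mx distinct_card[OF dist] by simp
  then show thesis
    using that rtrancl_path_relpow[OF path] by blast
qed

end

text \<open>Vertices are 4-tuples over the source structure.  Writing \<open>mn\<close>, \<open>mx\<close> for its least and
  greatest element, they are, for each copy \<open>c \<in> {mn, mx}\<close>, the cells \<open>[c, mn, v, i]\<close> (vertex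
  \<open>v\<close> in layer \<open>i\<close>), the vertex \<open>[c, mx, mn, mn]\<close> adjacent to the whole layer \<open>mn\<close> and the probe
  \<open>[c, mx, mx, mn]\<close> adjacent to \<open>[c, mn, s, mx]\<close>; and the hub \<open>[mn, mx, mn, mx]\<close>, adjacent to
  \<open>[c, mn, s, mn]\<close> for both copies.  If \<open>mn = mx\<close> all these tuples coincide, and the guard
  in \<open>edge_fm\<close> prevents loops.\<close>

definition kor :: "kfm \<Rightarrow> kfm \<Rightarrow> kfm" where
  "kor p q = KNot (KAnd (KNot p) (KNot q))"

lemma ksat_kor [simp]: "ksat A \<sigma> (kor p q) \<longleftrightarrow> ksat A \<sigma> p \<or> ksat A \<sigma> q"
  and kfv_kor [simp]: "kfv (kor p q) = kfv p \<union> kfv q"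
  unfolding kor_def by simp_all

definition vertex_fm :: kfm where
  "vertex_fm = KAnd (kor (KEq (KVar 0) KCmin) (KEq (KVar 0) KCmax))
     (kor (KEq (KVar 1) KCmin) (KAnd (KEq (KVar 1) KCmax)
       (kor (KAnd (KEq (KVar 2) KCmin) (KEq (KVar 3) KCmin))
         (kor (KAnd (KEq (KVar 2) KCmax) (KEq (KVar 3) KCmin))
           (KAnd (KEq (KVar 0) KCmin) (KAnd (KEq (KVar 2) KCmin) (KEq (KVar 3) KCmax)))))))"

definition layer_edge_fm :: "nat \<Rightarrow> nat \<Rightarrow> kfm" where
  "layer_edge_fm x y = KAnd (KEq (KVar x) (KVar y)) (KAnd (KEq (KVar (x+1)) KCmin)
     (KAnd (KEq (KVar (y+1)) KCmin) (KAnd (KEq (KVar (y+3)) (KSucc (KVar (x+3))))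
     (KAnd (KNot (KEq (KVar (x+3)) KCmax))
     (kor (KEq (KVar (x+2)) (KVar (y+2))) (KRel (KVar (x+2)) (KVar (y+2))))))))"

definition zero_edge_fm :: "nat \<Rightarrow> nat \<Rightarrow> kfm" where
  "zero_edge_fm x y = KAnd (KEq (KVar (x+1)) KCmax) (KAnd (KEq (KVar (x+2)) KCmin)
     (KAnd (KEq (KVar (x+3)) KCmin) (KAnd (KEq (KVar y) (KVar x))
     (KAnd (KEq (KVar (y+1)) KCmin) (KEq (KVar (y+3)) KCmin)))))"

definition probe_edge_fm :: "nat \<Rightarrow> nat \<Rightarrow> kfm" where
  "probe_edge_fm x y = KAnd (KEq (KVar (x+1)) KCmax) (KAnd (KEq (KVar (x+2)) KCmax)
     (KAnd (KEq (KVar (x+3)) KCmin) (KAnd (KEq (KVar y) (KVar x))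
     (KAnd (KEq (KVar (y+1)) KCmin) (KAnd (KEq (KVar (y+2)) KCs) (KEq (KVar (y+3)) KCmax))))))"

definition hub_edge_fm :: "nat \<Rightarrow> nat \<Rightarrow> kfm" where
  "hub_edge_fm x y = KAnd (KEq (KVar x) KCmin) (KAnd (KEq (KVar (x+1)) KCmax)
     (KAnd (KEq (KVar (x+2)) KCmin) (KAnd (KEq (KVar (x+3)) KCmax)
     (KAnd (KEq (KVar (y+1)) KCmin) (KAnd (KEq (KVar (y+2)) KCs) (KEq (KVar (y+3)) KCmin))))))"

definition edge_fm :: kfm where
  "edge_fm = KAnd (KNot (KEq KCmin KCmax))
     (kor (kor (layer_edge_fm 0 4) (layer_edge_fm 4 0))
       (kor (kor (zero_edge_fm 0 4) (zero_edge_fm 4 0))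
         (kor (kor (probe_edge_fm 0 4) (probe_edge_fm 4 0))
           (kor (hub_edge_fm 0 4) (hub_edge_fm 4 0)))))"

definition reach_interp :: interp where
  "reach_interp = \<lparr> ik = 4, idom = vertex_fm, iedge = edge_fm,
     iconsts = [([], [KCmin, KCmax, KCmin, KCmax]), ([], [KCmin, KCmin, KCs, KCmin]),
                ([], [KCmin, KCmin, KCt, KCmax]), ([], [KCmin, KCmax, KCmax, KCmin]),
                ([], [KCmax, KCmin, KCt, KCmax]), ([], [KCmax, KCmax, KCmax, KCmin])] \<rparr>"

lemma wf_reach_interp: "wf_interp 6 reach_interp"
  unfolding wf_interp_def reach_interp_def closed_tuple_def vertex_fm_def edge_fm_def
    layer_edge_fm_def zero_edge_fm_def probe_edge_fm_def hub_edge_fm_def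
  by auto

lemma length_4_iff: "length xs = 4 \<longleftrightarrow> (\<exists>a b c d. xs = [a, b, c, d])"
  by (auto simp: numeral_eq_Suc length_Suc_conv)

context reach_instance
begin

definition G :: "nat list pgraph" where
  "G = interp_struct reach_interp A"

abbreviation cell :: "nat \<Rightarrow> nat \<Rightarrow> nat \<Rightarrow> nat list" where
  "cell c v i \<equiv> [c, mn, v, i]"
abbreviation zero :: "nat \<Rightarrow> nat list" where
  "zero c \<equiv> [c, mx, mn, mn]"
abbreviation probe :: "nat \<Rightarrow> nat list" where
  "probe c \<equiv> [c, mx, mx, mn]"
abbreviation hub :: "nat list" where
  "hub \<equiv> [mn, mx, mn, mx]"

lemma vertices_G_iff: "x \<in> gV G \<longleftrightarrow> length x = 4 \<and> set x \<subseteq> dV A \<and> ksat A (tuple_assign x) vertex_fm"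
  unfolding G_def interp_struct_def reach_interp_def by simp

lemma ksat_vertex_fm: "ksat A (tuple_assign [a, b, c, d]) vertex_fm \<longleftrightarrow>
  (a = mn \<or> a = mx) \<and>
  (b = mn \<or> b = mx \<and> (c = mn \<and> d = mn \<or> c = mx \<and> d = mn \<or> a = mn \<and> c = mn \<and> d = mx))"
  unfolding vertex_fm_def by (simp add: tuple_assign_def)

lemma vertices_G: "x \<in> gV G \<longleftrightarrow>
  (\<exists>c v i. c \<in> {mn, mx} \<and> v \<in> dV A \<and> i \<in> dV A \<and> x = cell c v i) \<or>
  (\<exists>c\<in>{mn, mx}. x = zero c \<or> x = probe c) \<or> x = hub"
  (is "_ \<longleftrightarrow> ?cell \<or> ?other")
proof
  assume "x \<in> gV G"
  then obtain a b c d where x: "x = [a, b, c, d]" "a \<in> dV A" "c \<in> dV A" "d \<in> dV A"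
    and a: "a = mn \<or> a = mx"
    and b: "b = mn \<or> b = mx \<and> (c = mn \<and> d = mn \<or> c = mx \<and> d = mn \<or> a = mn \<and> c = mn \<and> d = mx)"
    unfolding vertices_G_iff length_4_iff by (auto simp: ksat_vertex_fm)
  from b show "?cell \<or> ?other"
  proof (elim disjE conjE)
    assume "b = mn"
    then have ?cell
      using x a by blast
    then show ?thesis ..
  qed (use x a in auto)
next
  assume "?cell \<or> ?other"
  then show "x \<in> gV G"
    unfolding vertices_G_iff using mn_V mx_V by (auto simp: ksat_vertex_fm)
qed

definition layer_step :: "nat list \<Rightarrow> nat list \<Rightarrow> bool" where
  "layer_step x y \<longleftrightarrow>
     (\<exists>c u v i. x = cell c u i \<and> y = cell c v (dS A i) \<and> i \<noteq> mx \<and> (u = v \<or> (u, v) \<in> dE A))"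

definition zero_step :: "nat list \<Rightarrow> nat list \<Rightarrow> bool" where
  "zero_step x y \<longleftrightarrow> (\<exists>c v. x = zero c \<and> y = cell c v mn)"

definition probe_step :: "nat list \<Rightarrow> nat list \<Rightarrow> bool" where
  "probe_step x y \<longleftrightarrow> (\<exists>c. x = probe c \<and> y = cell c (ds A) mx)"

definition hub_step :: "nat list \<Rightarrow> nat list \<Rightarrow> bool" where
  "hub_step x y \<longleftrightarrow> (\<exists>c. x = hub \<and> y = cell c (ds A) mn)"

definition base_edge :: "nat list \<Rightarrow> nat list \<Rightarrow> bool" where
  "base_edge x y \<longleftrightarrow> layer_step x y \<or> zero_step x y \<or> probe_step x y \<or> hub_step x y"

context
  fixes x y :: "nat list"
  assumes len: "length x = 4" "length y = 4"
begin

lemma ksat_layer_edge_fm: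
  "ksat A (tuple_assign (x @ y)) (layer_edge_fm 0 4) \<longleftrightarrow> layer_step x y"
  "ksat A (tuple_assign (x @ y)) (layer_edge_fm 4 0) \<longleftrightarrow> layer_step y x"
  using len unfolding length_4_iff layer_step_def layer_edge_fm_def
  by (elim exE; simp add: tuple_assign_def; blast)+

lemma ksat_zero_edge_fm:
  "ksat A (tuple_assign (x @ y)) (zero_edge_fm 0 4) \<longleftrightarrow> zero_step x y"
  "ksat A (tuple_assign (x @ y)) (zero_edge_fm 4 0) \<longleftrightarrow> zero_step y x"
  using len unfolding length_4_iff zero_step_def zero_edge_fm_def
  by (elim exE; simp add: tuple_assign_def; blast)+

lemma ksat_probe_edge_fm:
  "ksat A (tuple_assign (x @ y)) (probe_edge_fm 0 4) \<longleftrightarrow> probe_step x y"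
  "ksat A (tuple_assign (x @ y)) (probe_edge_fm 4 0) \<longleftrightarrow> probe_step y x"
  using len unfolding length_4_iff probe_step_def probe_edge_fm_def
  by (elim exE; simp add: tuple_assign_def; blast)+

lemma ksat_hub_edge_fm:
  "ksat A (tuple_assign (x @ y)) (hub_edge_fm 0 4) \<longleftrightarrow> hub_step x y"
  "ksat A (tuple_assign (x @ y)) (hub_edge_fm 4 0) \<longleftrightarrow> hub_step y x"
  using len unfolding length_4_iff hub_step_def hub_edge_fm_def
  by (elim exE; simp add: tuple_assign_def; blast)+

lemma ksat_edge_fm:
  "ksat A (tuple_assign (x @ y)) edge_fm \<longleftrightarrow> mn \<noteq> mx \<and> (base_edge x y \<or> base_edge y x)"
  unfolding edge_fm_def base_edge_def
  by (auto simp: ksat_layer_edge_fm ksat_zero_edge_fm ksat_probe_edge_fm ksat_hub_edge_fm)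

end

lemma edges_G:
  "(x, y) \<in> gE G \<longleftrightarrow> x \<in> gV G \<and> y \<in> gV G \<and> mn \<noteq> mx \<and> (base_edge x y \<or> base_edge y x)"
  unfolding G_def interp_struct_def reach_interp_def using ksat_edge_fm by (auto simp: Let_def)

lemma cell_vertex: "c \<in> {mn, mx} \<Longrightarrow> v \<in> dV A \<Longrightarrow> i \<in> dV A \<Longrightarrow> cell c v i \<in> gV G"
  and zero_vertex: "c \<in> {mn, mx} \<Longrightarrow> zero c \<in> gV G"
  and probe_vertex: "c \<in> {mn, mx} \<Longrightarrow> probe c \<in> gV G"
  and hub_vertex: "hub \<in> gV G"
  unfolding vertices_G by blast+

lemma edges_G_subset: "gE G \<subseteq> gV G \<times> gV G"
  using edges_G by auto

lemma sym_edges_G: "sym (gE G)"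
  unfolding sym_def using edges_G by blast

lemma edge_sym: "(x, y) \<in> gE G \<Longrightarrow> (y, x) \<in> gE G"
  using sym_edges_G unfolding sym_def by blast

lemma irrefl_edges_G: "irrefl (gE G)"
  unfolding irrefl_on_def
proof
  fix x
  show "(x, x) \<notin> gE G"
  proof
    assume "(x, x) \<in> gE G"
    then have "x \<in> gV G" "mn \<noteq> mx" "base_edge x x"
      using edges_G by auto
    then show False
      unfolding vertices_G base_edge_def layer_step_def zero_step_def probe_step_def hub_step_def
      using succ_neq by auto metis+
  qed
qed

lemma finite_G: "finite (gV G)"
proof (rule finite_subset)
  show "gV G \<subseteq> {xs. set xs \<subseteq> dV A \<and> length xs = 4}"
    using vertices_G_iff by auto
  show "finite {xs. set xs \<subseteq> dV A \<and> length xs = 4}"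
    using finite_V by (rule finite_lists_length_eq)
qed

lemma constants_G: "gc G = [hub, cell mn (ds A) mn, cell mn (dt A) mx, probe mn,
    cell mx (dt A) mx, probe mx]"
  unfolding G_def interp_struct_def reach_interp_def by simp

lemma npgraph_G: "npgraph 6 G"
  unfolding npgraph_def constants_G
  using finite_G edges_G_subset sym_edges_G irrefl_edges_G
    cell_vertex zero_vertex probe_vertex hub_vertex s_V t_V mn_V mx_V
  by auto

lemma cell_vertex_iff:
  "mn \<noteq> mx \<Longrightarrow> cell c v i \<in> gV G \<longleftrightarrow> c \<in> {mn, mx} \<and> v \<in> dV A \<and> i \<in> dV A"
  unfolding vertices_G by auto

context
  assumes nontrivial: "mn \<noteq> mx"
begin

lemma layer_edge:
  "c \<in> {mn, mx} \<Longrightarrow> u \<in> dV A \<Longrightarrow> v \<in> dV A \<Longrightarrow> i \<in> dV A \<Longrightarrow> i \<noteq> mx \<Longrightarrow>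
    u = v \<or> (u, v) \<in> dE A \<Longrightarrow> (cell c u i, cell c v (dS A i)) \<in> gE G"
  by (simp add: edges_G nontrivial cell_vertex_iff succ_V base_edge_def layer_step_def)

lemma zero_edge: "c \<in> {mn, mx} \<Longrightarrow> v \<in> dV A \<Longrightarrow> (zero c, cell c v mn) \<in> gE G"
  by (simp add: edges_G nontrivial cell_vertex_iff zero_vertex mn_V base_edge_def zero_step_def)

lemma probe_edge: "c \<in> {mn, mx} \<Longrightarrow> (probe c, cell c (ds A) mx) \<in> gE G"
  by (simp add: edges_G nontrivial cell_vertex_iff probe_vertex s_V mx_V base_edge_def
      probe_step_def)

lemma hub_edge: "c \<in> {mn, mx} \<Longrightarrow> (hub, cell c (ds A) mn) \<in> gE G"
  by (simp add: edges_G nontrivial cell_vertex_iff hub_vertex s_V mn_V base_edge_def hub_step_def)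

lemma cell_connected_hub:
  assumes c: "c \<in> {mn, mx}" and v: "v \<in> dV A"
  shows "j \<le> rank mx \<Longrightarrow> (cell c v ((dS A ^^ j) mn), hub) \<in> (gE G)\<^sup>*"
proof (induction j)
  case 0
  have "(cell c v mn, zero c) \<in> gE G" "(zero c, cell c (ds A) mn) \<in> gE G"
    "(cell c (ds A) mn, hub) \<in> gE G"
    using zero_edge[OF c] hub_edge[OF c] edge_sym v s_V by blast+
  then show ?case
    by (simp add: converse_rtrancl_into_rtrancl)
next
  case (Suc j)
  define i where "i = (dS A ^^ j) mn"
  have "i \<in> dV A" "i \<noteq> mx"
    using succ_iter[of j] Suc.prems unfolding i_def by auto
  then have "(cell c v (dS A i), cell c v i) \<in> gE G"
    using edge_sym layer_edge[OF c v v] by blast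
  then show ?case
    using Suc unfolding i_def by (simp add: converse_rtrancl_into_rtrancl)
qed

lemma connected_hub:
  assumes x: "x \<in> gV G"
  shows "(x, hub) \<in> (gE G)\<^sup>*"
proof -
  have cell: "(cell c v i, hub) \<in> (gE G)\<^sup>*" if "c \<in> {mn, mx}" "v \<in> dV A" "i \<in> dV A" for c v i
    using cell_connected_hub[OF that(1,2) rank_le_rank_mx[OF that(3)]] succ_iter_rank[OF that(3)]
    by simp
  consider (cell) c v i where "c \<in> {mn, mx}" "v \<in> dV A" "i \<in> dV A" "x = cell c v i"
    | (zero) c where "c \<in> {mn, mx}" "x = zero c"
    | (probe) c where "c \<in> {mn, mx}" "x = probe c"
    | (hub) "x = hub"
    using x unfolding vertices_G by blast
  then show ?thesis
  proof cases
    case (zero c)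
    then show ?thesis
      using zero_edge[OF zero(1) s_V] cell[OF zero(1) s_V mn_V] converse_rtrancl_into_rtrancl
      by simp
  next
    case (probe c)
    then show ?thesis
      using probe_edge[OF probe(1)] cell[OF probe(1) s_V mx_V] converse_rtrancl_into_rtrancl by simp
  qed (use cell in simp_all)
qed

lemma connected_G: "x \<in> gV G \<Longrightarrow> y \<in> gV G \<Longrightarrow> (x, y) \<in> (gE G)\<^sup>*"
  using connected_hub[of x] rtrancl_sym[OF sym_edges_G connected_hub[of y]] by (rule rtrancl_trans)

end

end

locale reach_traversal = reach_instance +
  fixes L :: "(nat list \<times> nat list) set" and r :: "nat list"
  assumes nontrivial: "mn \<noteq> mx"
    and bft_L: "is_bft G L"
    and r_vertex: "r \<in> gV G"
    and r_least: "\<And>x. x \<in> gV G \<Longrightarrow> x \<noteq> r \<Longrightarrow> (r, x) \<in> L"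

sublocale reach_traversal \<subseteq> rooted_bft G L r
  using finite_G edges_G_subset bft_L r_vertex r_least connected_G[OF nontrivial r_vertex]
  by unfold_locales blast+

context reach_traversal
begin

definition copy :: "nat \<Rightarrow> nat list set" where
  "copy c = {x \<in> gV G. hd x = c \<and> x \<noteq> hub}"

text \<open>A lower bound for the distance from the entry \<open>cell c s mn\<close> inside \<open>copy c\<close>: a cell in
  layer \<open>i\<close> is at distance at least \<open>i\<close>, and at least \<open>i + 2\<close> if its vertex is not reachable from
  \<open>s\<close>, since it can then only be reached through \<open>zero c\<close>.\<close>

definition potential :: "nat list \<Rightarrow> nat" where
  "potential x = (if x ! 1 = mx then (if x ! 2 = mn then 1 else Suc (rank mx))
     else rank (x ! 3) + (if (ds A, x ! 2) \<in> (dE A)\<^sup>* then 0 else 2))"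

lemma potential_cell: "potential (cell c v i) = rank i + (if (ds A, v) \<in> (dE A)\<^sup>* then 0 else 2)"
  and potential_zero: "potential (zero c) = 1"
  and potential_probe: "potential (probe c) = Suc (rank mx)"
  unfolding potential_def using nontrivial by simp_all

lemma cell_in_copy: "c \<in> {mn, mx} \<Longrightarrow> v \<in> dV A \<Longrightarrow> i \<in> dV A \<Longrightarrow> cell c v i \<in> copy c"
  and probe_in_copy: "c \<in> {mn, mx} \<Longrightarrow> probe c \<in> copy c"
  unfolding copy_def using cell_vertex probe_vertex nontrivial by auto

lemma copy_single_entry:
  assumes "x \<in> copy c" "(y, x) \<in> gE G" "y \<notin> copy c"
  shows "x = cell c (ds A) mn \<and> y = hub"
  using assms unfolding copy_def edges_G base_edge_def layer_step_def zero_step_def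
    probe_step_def hub_step_def
  by auto

lemma potential_layer_step:
  assumes "layer_step y x" "y \<in> gV G"
  shows "potential x \<le> potential y + 1" "potential y \<le> potential x + 1"
proof -
  obtain c u v i where y: "y = cell c u i" and x: "x = cell c v (dS A i)"
    and i: "i \<noteq> mx" and uv: "u = v \<or> (u, v) \<in> dE A"
    using assms(1) unfolding layer_step_def by blast
  have "rank (dS A i) = Suc (rank i)"
    using rank_succ i assms(2) cell_vertex_iff[OF nontrivial] y by blast
  moreover have "(ds A, u) \<in> (dE A)\<^sup>* \<Longrightarrow> (ds A, v) \<in> (dE A)\<^sup>*"
    using uv by auto
  ultimately show "potential x \<le> potential y + 1" "potential y \<le> potential x + 1"
    unfolding x y potential_cell by auto
qed

lemma potential_step:
  assumes x: "x \<in> copy c" and y: "y \<in> copy c" and xy: "(y, x) \<in> gE G"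
  shows "potential x \<le> potential y + 1"
proof -
  have "x \<noteq> hub" "y \<noteq> hub" "base_edge x y \<or> base_edge y x"
    using assms unfolding copy_def edges_G by auto
  then consider "layer_step y x" | "layer_step x y" | "zero_step y x \<or> zero_step x y"
    | "probe_step y x \<or> probe_step x y"
    unfolding base_edge_def hub_step_def by blast
  then show ?thesis
  proof cases
    case 1
    then show ?thesis
      using potential_layer_step y unfolding copy_def by blast
  next
    case 2
    then show ?thesis
      using potential_layer_step x unfolding copy_def by blast
  qed (auto simp: zero_step_def probe_step_def potential_cell potential_zero potential_probe
      rank_mn)
qed

lemma copy_subset: "copy c \<subseteq> gV G"
  unfolding copy_def by blast

lemma copy_region:
  assumes c: "c \<in> {mn, mx}" and clean: "r \<notin> copy c"
  shows "copy c \<subseteq> gV G" "cell c (ds A) mn \<in> copy c" "r \<notin> copy c"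
    "\<And>x y. x \<in> copy c \<Longrightarrow> (y, x) \<in> gE G \<Longrightarrow> y \<notin> copy c \<Longrightarrow> x = cell c (ds A) mn"
    "\<And>x y. x \<in> copy c \<Longrightarrow> y \<in> copy c \<Longrightarrow> (y, x) \<in> gE G \<Longrightarrow> potential x \<le> potential y + 1"
    "potential (cell c (ds A) mn) = 0"
  using copy_subset cell_in_copy[OF c s_V mn_V] clean copy_single_entry potential_step
  by (auto simp: potential_cell rank_mn)

lemma level_copy_lower_bound:
  assumes c: "c \<in> {mn, mx}" and clean: "r \<notin> copy c" and x: "x \<in> copy c"
  shows "level (cell c (ds A) mn) + potential x \<le> level x"
  using level_region_lower_bound[of "copy c" _ potential, OF copy_region[OF c clean] x] .

lemma level_entry:
  assumes c: "c \<in> {mn, mx}" and clean: "r \<notin> copy c"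
  shows "level (cell c (ds A) mn) = Suc (level hub)"
proof -
  obtain y where "y \<notin> copy c" "(y, cell c (ds A) mn) \<in> gE G"
    "level (cell c (ds A) mn) = Suc (level y)"
    using region_entry_parent[of "copy c" _ potential, OF copy_region[OF c clean]] .
  then show ?thesis
    using copy_single_entry cell_in_copy[OF c s_V mn_V] by blast
qed

lemma level_cell_upper_bound:
  assumes c: "c \<in> {mn, mx}"
  shows "j \<le> rank mx \<Longrightarrow> k \<le> j \<Longrightarrow> (ds A, v) \<in> dE A ^^ k \<Longrightarrow>
    level (cell c v ((dS A ^^ j) mn)) \<le> level (cell c (ds A) mn) + j"
proof (induction j arbitrary: k v)
  case 0
  then show ?case by simp
next
  case (Suc j)
  define i where "i = (dS A ^^ j) mn"
  have i: "i \<in> dV A" "i \<noteq> mx"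
    using succ_iter[of j] Suc.prems(1) unfolding i_def by auto
  obtain u k' where u: "(ds A, u) \<in> dE A ^^ k'" "k' \<le> j" "u = v \<or> (u, v) \<in> dE A"
  proof (cases "k \<le> j")
    case True
    then show thesis
      using that Suc.prems(3) by blast
  next
    case False
    then have "(ds A, v) \<in> dE A ^^ Suc j"
      using Suc.prems(2,3) le_Suc_eq by auto
    then obtain u where "(ds A, u) \<in> dE A ^^ j" "(u, v) \<in> dE A"
      by (rule relpow_Suc_E)
    then show thesis
      using that by blast
  qed
  have "(cell c u i, cell c v (dS A i)) \<in> gE G"
    using layer_edge[OF nontrivial c _ _ i u(3)] relpow_from_s_V u(1) Suc.prems(3) by blast
  then have "level (cell c v (dS A i)) \<le> level (cell c u i) + 1"
    using level_edge edges_G_subset by blast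
  moreover have "level (cell c u i) \<le> level (cell c (ds A) mn) + j"
    using Suc.IH[OF _ u(2,1)] Suc.prems(1) unfolding i_def by simp
  ultimately show ?case
    unfolding i_def by simp
qed

text \<open>In a copy not containing the root, the traversal sees \<open>cell c t mx\<close> before \<open>probe c\<close>
  exactly when \<open>t\<close> is reachable: reachability puts the former within \<open>rank mx\<close> layers of the
  entry, while the latter is at distance \<open>rank mx + 1\<close>, and an unreachable \<open>t\<close> at least
  \<open>rank mx + 2\<close>.\<close>

lemma clean_copy_order_iff_reach:
  assumes c: "c \<in> {mn, mx}" and clean: "r \<notin> copy c"
  shows "(cell c (dt A) mx, probe c) \<in> L \<longleftrightarrow> (ds A, dt A) \<in> (dE A)\<^sup>*"
proof
  assume reach: "(ds A, dt A) \<in> (dE A)\<^sup>*"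
  obtain k where "k \<le> rank mx" "(ds A, dt A) \<in> dE A ^^ k"
    using reachable_within_rank_mx[OF reach] .
  then have "level (cell c (dt A) mx) \<le> level (cell c (ds A) mn) + rank mx"
    using level_cell_upper_bound[OF c order_refl] succ_iter_rank[OF mx_V] by metis
  moreover have "level (cell c (ds A) mn) + Suc (rank mx) \<le> level (probe c)"
    using level_copy_lower_bound[OF c clean probe_in_copy[OF c]] potential_probe by simp
  ultimately show "(cell c (dt A) mx, probe c) \<in> L"
    using level_less_imp_before cell_vertex probe_vertex c t_V mx_V by simp
next
  assume before: "(cell c (dt A) mx, probe c) \<in> L"
  show "(ds A, dt A) \<in> (dE A)\<^sup>*"
  proof (rule ccontr)
    assume unreachable: "(ds A, dt A) \<notin> (dE A)\<^sup>*"
    have "level (cell c (ds A) mx) \<le> level (cell c (ds A) mn) + rank mx"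
      using level_cell_upper_bound[OF c order_refl le0, of "ds A"] succ_iter_rank[OF mx_V] by simp
    moreover have "level (probe c) \<le> level (cell c (ds A) mx) + 1"
      using level_edge edge_sym[OF probe_edge[OF nontrivial c]] cell_vertex c s_V mx_V
      by blast
    moreover have "level (cell c (ds A) mn) + (rank mx + 2) \<le> level (cell c (dt A) mx)"
      using level_copy_lower_bound[OF c clean cell_in_copy[OF c t_V mx_V]] unreachable
      by (simp add: potential_cell)
    ultimately have "(probe c, cell c (dt A) mx) \<in> L"
      using level_less_imp_before cell_vertex probe_vertex c t_V mx_V by simp
    then show False
      using before L_asym by blast
  qed
qed

lemma hub_neighbour:
  assumes "(y, hub) \<in> gE G"
  shows "y = cell mn (ds A) mn \<or> y = cell mx (ds A) mn"
proof -
  have "y \<in> gV G" "hub_step hub y"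
    using assms nontrivial unfolding edges_G base_edge_def layer_step_def zero_step_def
      probe_step_def hub_step_def
    by auto
  then show ?thesis
    unfolding hub_step_def using cell_vertex_iff[OF nontrivial] by auto
qed

text \<open>If the root lies in copy \<open>mn\<close>, the BFS parent of the hub is the entry of copy \<open>mn\<close>,
  because the entry of the other copy comes one level after the hub.\<close>

lemma reach_iff_order:
  "((hub, cell mn (ds A) mn) \<in> L \<and> (cell mn (dt A) mx, probe mn) \<in> L \<or>
    (hub, cell mn (ds A) mn) \<notin> L \<and> hub \<noteq> cell mn (ds A) mn \<and> (cell mx (dt A) mx, probe mx) \<in> L)
   \<longleftrightarrow> (ds A, dt A) \<in> (dE A)\<^sup>*"
proof (cases "r \<in> copy mn")
  case False
  then have "(hub, cell mn (ds A) mn) \<in> L"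
    using level_entry level_less_imp_before hub_vertex cell_vertex s_V mn_V by simp
  then show ?thesis
    using clean_copy_order_iff_reach[OF _ False] by auto
next
  case True
  then have clean: "r \<notin> copy mx"
    using nontrivial unfolding copy_def by auto
  have "hub \<noteq> r"
    using True unfolding copy_def by blast
  then obtain y where y: "(y, hub) \<in> gE G" "level hub = Suc (level y)"
    using level_parent hub_vertex by metis
  then have "y = cell mn (ds A) mn"
    using hub_neighbour level_entry[OF _ clean] by fastforce
  then have "(cell mn (ds A) mn, hub) \<in> L"
    using y level_less_imp_before hub_vertex cell_vertex s_V mn_V by simp
  then show ?thesis
    using clean_copy_order_iff_reach[OF _ clean] L_asym nontrivial by auto
qed

end

definition gor :: "gfm \<Rightarrow> gfm \<Rightarrow> gfm" where
  "gor p q = GNot (GAnd (GNot p) (GNot q))"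

definition reach_sentence :: gfm where
  "reach_sentence = gor (GEq (GConst 0) (GConst 1))
     (gor (GAnd (GLess (GConst 0) (GConst 1)) (GLess (GConst 2) (GConst 3)))
       (GAnd (GNot (GLess (GConst 0) (GConst 1)))
         (GAnd (GNot (GEq (GConst 0) (GConst 1))) (GLess (GConst 4) (GConst 5)))))"

lemma gsentence_reach_sentence: "gsentence 6 reach_sentence"
  unfolding gsentence_def reach_sentence_def gor_def by auto

lemma gmodels_reach_sentence:
  "gmodels H L reach_sentence \<longleftrightarrow>
    gc H ! 0 = gc H ! 1 \<or> (gc H ! 0, gc H ! 1) \<in> L \<and> (gc H ! 2, gc H ! 3) \<in> L \<or>
    (gc H ! 0, gc H ! 1) \<notin> L \<and> gc H ! 0 \<noteq> gc H ! 1 \<and> (gc H ! 4, gc H ! 5) \<in> L"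
  unfolding gmodels_def reach_sentence_def gor_def by simp

lemma gmodels_reach_sentence_pullback:
  assumes bij: "bij_betw f (gV G) (gV H)" and constants: "gc H = map f (gc G)"
    and len: "length (gc G) = 6" and in_V: "set (gc G) \<subseteq> gV G"
  shows "gmodels G {(x, y). x \<in> gV G \<and> y \<in> gV G \<and> (f x, f y) \<in> L} reach_sentence \<longleftrightarrow>
    gmodels H L reach_sentence"
proof -
  have in_V': "gc G ! i \<in> gV G" if "i < 6" for i
    using that len in_V nth_mem[of i "gc G"] by auto
  have inj: "inj_on f (gV G)"
    using bij by (rule bij_betw_imp_inj_on)
  have H: "gc H ! i = f (gc G ! i)" if "i < 6" for i
    using that constants len by simp
  have "gc H ! i = gc H ! j \<longleftrightarrow> gc G ! i = gc G ! j" if "i < 6" "j < 6" for i j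
    using H[OF that(1)] H[OF that(2)] inj_on_eq_iff[OF inj in_V'[OF that(1)] in_V'[OF that(2)]]
    by simp
  moreover have "(gc H ! i, gc H ! j) \<in> L \<longleftrightarrow>
      (gc G ! i, gc G ! j) \<in> {(x, y). x \<in> gV G \<and> y \<in> gV G \<and> (f x, f y) \<in> L}"
    if "i < 6" "j < 6" for i j
    using H[OF that(1)] H[OF that(2)] in_V'[OF that(1)] in_V'[OF that(2)] by simp
  ultimately show ?thesis
    unfolding gmodels_reach_sentence by simp
qed

context reach_instance
begin

lemma gmodels_G_iff_reach:
  assumes bft: "is_bft G L"
  shows "gmodels G L reach_sentence \<longleftrightarrow> (ds A, dt A) \<in> (dE A)\<^sup>*"
proof (cases "mn = mx")
  case True
  have "ds A = mn" "dt A = mn"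
    by (rule trivial_V[OF True s_V], rule trivial_V[OF True t_V])
  then show ?thesis
    unfolding gmodels_reach_sentence constants_G using True by simp
next
  case False
  have "lin_order (gV G) L"
    using bft unfolding is_bft_def by blast
  then obtain r where "r \<in> gV G" "\<And>x. x \<in> gV G \<Longrightarrow> x \<noteq> r \<Longrightarrow> (r, x) \<in> L"
    using lin_order_least finite_G hub_vertex by metis
  then interpret reach_traversal A L r
    using False bft by unfold_locales
  show ?thesis
    unfolding gmodels_reach_sentence constants_G using reach_iff_order nontrivial by simp
qed

end

definition reach_graphs :: "nat list pgraph set" where
  "reach_graphs = interp_struct reach_interp ` D2S"

lemma bft_invariant_reach_sentence: "bft_invariant reach_graphs reach_sentence"
  unfolding bft_invariant_def
proof (intro allI impI, elim conjE)
  fix G L H L'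
  assume "G \<in> reach_graphs" "H \<in> reach_graphs" and bft: "is_bft G L" "is_bft H L'"
    and "pg_iso G H"
  then obtain A B where "A \<in> D2S" "B \<in> D2S"
    and G: "G = interp_struct reach_interp A" and H: "H = interp_struct reach_interp B"
    unfolding reach_graphs_def by blast
  then interpret a: reach_instance A + b: reach_instance B
    by unfold_locales
  obtain f where f: "bij_betw f (gV G) (gV H)"
    "\<forall>x\<in>gV G. \<forall>y\<in>gV G. (x, y) \<in> gE G \<longleftrightarrow> (f x, f y) \<in> gE H" "gc H = map f (gc G)"
    using \<open>pg_iso G H\<close> unfolding pg_iso_def by blast
  have npG: "npgraph 6 G" and npH: "npgraph 6 H"
    using a.npgraph_G b.npgraph_G unfolding G H a.G_def b.G_def .
  let ?L = "{(x, y). x \<in> gV G \<and> y \<in> gV G \<and> (f x, f y) \<in> L'}"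
  have "is_bft G ?L"
    using is_bft_pullback[OF f(1) _ _ _ bft(2)] f(2) npG npH unfolding npgraph_def by blast
  then have "gmodels G L reach_sentence \<longleftrightarrow> gmodels G ?L reach_sentence"
    using a.gmodels_G_iff_reach bft(1) unfolding G a.G_def by blast
  also have "\<dots> \<longleftrightarrow> gmodels H L' reach_sentence"
    using gmodels_reach_sentence_pullback[OF f(1,3)] npG unfolding npgraph_def by blast
  finally show "gmodels G L reach_sentence \<longleftrightarrow> gmodels H L' reach_sentence" .
qed

lemma basic_bft_definable_reach_query: "basic_bft_definable D2S reach_query"
  unfolding basic_bft_definable_def
proof (intro conjI exI)
  show "reach_query \<subseteq> D2S"
    unfolding reach_query_def by blast
  show "reach_graphs \<subseteq> {G. npgraph 6 G}"
    unfolding reach_graphs_def using reach_instance.npgraph_G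
    by (auto simp: reach_instance_def reach_instance.G_def)
  show "\<forall>A\<in>D2S. interp_struct reach_interp A \<in> reach_graphs"
    unfolding reach_graphs_def by blast
  show "\<forall>A\<in>D2S. A \<in> reach_query \<longleftrightarrow> bft_models (interp_struct reach_interp A) reach_sentence"
  proof
    fix A
    assume "A \<in> D2S"
    then interpret reach_instance A
      by unfold_locales
    obtain L where "is_bft G L"
      using bft_exists finite_G edges_G_subset by blast
    then show "A \<in> reach_query \<longleftrightarrow> bft_models (interp_struct reach_interp A) reach_sentence"
      using gmodels_G_iff_reach \<open>A \<in> D2S\<close> unfolding reach_query_def bft_models_def G_def by blast
  qed
qed (rule gsentence_reach_sentence wf_reach_interp bft_invariant_reach_sentence)+

theorem corollary1:
  shows "bft_definable D2S reach_query"
  by (rule bft_definable.basic[OF basic_bft_definable_reach_query])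

end
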